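(* Let $n=12$. There is no permutation sequence $(\pi_1,\ldots,\pi_{12})$ of length $12$ with the following property: for every $t\in[12]$, every $s\ge 1$ with $s+t-1\le 12$, and every player $i\in N$, there exists a day $d\in\{s,s+1,\ldots,s+t-1\}$ with $\pi_d(i)\le \lceil 12/t\rceil$.
   Context: $N$ is a set of $n$ players and $[n]=\{1,\ldots,n\}$ a set of $n$ items (smaller number = better item). A permutation sequence of length $n$ is an ordered tuple $(\pi_1,\ldots,\pi_n)$ of bijections $\pi_d : N\to[n]$; on day $d$ player $i$ receives item $\pi_d(i)$. *)

theory Defs
  imports Complex_Main
begin

definition perm_seq :: "'a set \<Rightarrow> nat \<Rightarrow> (nat \<Rightarrow> 'a \<Rightarrow> nat) \<Rightarrow> bool" where
  "perm_seq N n \<pi> \<longleftrightarrow> (\<forall>d\<in>{1..n}. bij_betw (\<pi> d) N {1..n})"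

definition window_good :: "'a set \<Rightarrow> nat \<Rightarrow> (nat \<Rightarrow> 'a \<Rightarrow> nat) \<Rightarrow> bool" where
  "window_good N n \<pi> \<longleftrightarrow>
     (\<forall>t\<in>{1..n}. \<forall>s. 1 \<le> s \<and> s + t - 1 \<le> n \<longrightarrow>
        (\<forall>i\<in>N. \<exists>d\<in>{s..s+t-1}. real (\<pi> d i) \<le> real_of_int (ceiling (real n / real t))))"

end

theory Submission
  imports Defs "HOL-Library.Disjoint_Sets"
begin

(* If t divides n, a window of t consecutive days contains exactly t * (n/t) = n pairs
   (day, player) in which the player gets an item at most n/t; as every player needs such a
   day, every player has exactly one.  Take the player i with item 1 on day 1.  Exactness for
   t = 6 on days 1..6 and 2..7 forces item at most 2 on day 7.  Exactness for t = 4 on days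
   1..4 and 4..7 then leaves i no item at most 3 on days 2..6, contradicting the window of
   days 2..5. *)

lemma disjoint_family_on_if_card_UN_eq_sum:
  assumes "finite W" "\<And>d. d \<in> W \<Longrightarrow> finite (A d)"
    and "card (\<Union>d\<in>W. A d) = (\<Sum>d\<in>W. card (A d))"
  shows "disjoint_family_on A W"
proof -
  define S where "S = Sigma W A"
  have "finite S" unfolding S_def using assms(1,2) by auto
  have "card S = (\<Sum>d\<in>W. card (A d))"
    unfolding S_def using assms(1,2) by (simp add: card_SigmaI)
  moreover have "snd ` S = (\<Union>d\<in>W. A d)" unfolding S_def by force
  ultimately have "inj_on snd S"
    using \<open>finite S\<close> assms(3) by (simp add: inj_on_iff_eq_card)
  then show ?thesis
    unfolding disjoint_family_on_def S_def inj_on_def by fastforce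
qed

lemma card_bij_betw_le:
  assumes "bij_betw f N {1..(n::nat)}" "c \<le> n"
  shows "card {i\<in>N. f i \<le> c} = c"
proof -
  have "bij_betw f {i\<in>N. f i \<le> c} {1..c}"
    using bij_betw_subset[OF assms(1), of "{i\<in>N. f i \<le> c}"] assms
    unfolding bij_betw_def by (force simp: image_iff)
  then show ?thesis by (simp add: bij_betw_same_card)
qed

lemma window_good_exists_day:
  assumes "window_good N n \<pi>" "t dvd n" "0 < t" "1 \<le> s" "s + t \<le> n + 1" "i \<in> N"
  shows "\<exists>d\<in>{s..<s+t}. \<pi> d i \<le> n div t"
proof -
  have "t \<in> {1..n}" "s + t - 1 \<le> n" using assms(3-5) by auto
  then obtain d where "d \<in> {s..s+t-1}" "real (\<pi> d i) \<le> real_of_int (ceiling (real n / real t))"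
    using assms(1,4,6) unfolding window_good_def by blast
  moreover have "real_of_int (ceiling (real n / real t)) = real (n div t)"
    using assms(2,3) by (elim dvdE) simp
  ultimately show ?thesis using assms(3) by auto
qed

lemma window_good_unique_day:
  assumes "perm_seq N n \<pi>" "window_good N n \<pi>" "card N = n"
    and "t dvd n" "0 < t" "1 \<le> s" "s + t \<le> n + 1" "i \<in> N"
    and "d1 \<in> {s..<s+t}" "\<pi> d1 i \<le> n div t" "d2 \<in> {s..<s+t}" "\<pi> d2 i \<le> n div t"
  shows "d1 = d2"
proof -
  define W where "W = {s..<s+t}"
  define A where "A d = {i\<in>N. \<pi> d i \<le> n div t}" for d
  have "n \<noteq> 0" using assms(5-7) by linarith
  then have "finite N" using assms(3) card_ge_0_finite by blast
  have "card (A d) = n div t" if "d \<in> W" for d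
    unfolding A_def
  proof (rule card_bij_betw_le)
    show "bij_betw (\<pi> d) N {1..n}"
      using assms(1) that unfolding perm_seq_def W_def using assms(6,7) by auto
  qed (simp add: div_le_dividend)
  then have "(\<Sum>d\<in>W. card (A d)) = n"
    using assms(4) by (simp add: W_def)
  moreover have "(\<Union>d\<in>W. A d) = N"
    using window_good_exists_day[OF assms(2,4-7)] unfolding A_def W_def by blast
  ultimately have "disjoint_family_on A W"
    using \<open>finite N\<close> assms(3)
    by (intro disjoint_family_on_if_card_UN_eq_sum) (auto simp: W_def A_def)
  then show ?thesis
    using assms(8-12) unfolding disjoint_family_on_def A_def W_def by blast
qed

theorem mainTheorem8:
  fixes N :: "'a set"
  assumes "finite N" and "card N = 12"
  shows "\<not> (\<exists>\<pi>. perm_seq N 12 \<pi> \<and> window_good N 12 \<pi>)"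
proof
  assume "\<exists>\<pi>. perm_seq N 12 \<pi> \<and> window_good N 12 \<pi>"
  then obtain \<pi> where perm: "perm_seq N 12 \<pi>" and good: "window_good N 12 \<pi>" by blast
  note exists = window_good_exists_day[OF good]
  note unique = window_good_unique_day[OF perm good assms(2)]
  have "1 \<in> \<pi> 1 ` N" using perm unfolding perm_seq_def bij_betw_def by simp
  then obtain i where i: "i \<in> N" "\<pi> 1 i = 1" by force
  obtain d where d: "d \<in> {2..<8}" "\<pi> d i \<le> 2" using exists[of 6 2 i] i by auto
  have "d = 7" using unique[of 6 1 i d 1] d i by fastforce
  with d have "\<pi> 7 i \<le> 3" by simp
  then have "\<not> \<pi> e i \<le> 3" if "e \<in> {2..<7}" for e
    using that unique[of 4 1 i e 1] unique[of 4 4 i e 7] i by (cases "e < 5") auto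
  then show False using exists[of 4 2 i] i by fastforce
qed

end
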